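(* Let $N>0$, $d>0$ be real numbers with $0<N<1$ and $d^{2}>N^{-2}-1$. Let $F(z)=(1-Nz)^{2}\left(1-\frac{d^{2}}{z^{2}-1}\right)$, $\varphi(z)=\frac{1}{d^{2}}+\frac{1-N^{-1}z}{(z^{2}-1)^{2}}$ and $I_{2}=(1,\sqrt{1+d^{2}})$. Then the equation $\varphi(z)=0$ has exactly one root $z_{01}$ in $I_{2}$. Moreover, for real $A>0$, the equation $F(z)+A=0$ (i.e. the quartic equation $(1-Nz)^{2}(z^{2}-1-d^{2})+A(z^{2}-1)=0$ in the complex variable $z$) has four real roots when $0<A\leq -F(z_{01})$, and has two real and two (non-real) complex roots when $A>-F(z_{01})$.
   Context: This is the (dimensionless) dispersion relation for Kelvin–Helmholtz perturbations of two thin co-flowing layers (a pure incompressible fluid and a bubbly fluid): $z=ad/(u_{20}-c)$ with $c$ the phase velocity, $d=1/(bk)$, $N=M/d$ with $M=(u_{20}-u_{10})/a$, and $A=h_0\rho_{20}/((H_0-h_0)\rho_{10})>0$. The equation $F(z)+A=0$ is regarded as the fourth-degree polynomial equation obtained by multiplying by $z^{2}-1$; roots are counted with multiplicity. *)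

theory Defs
  imports "HOL-Analysis.Analysis" "HOL-Computational_Algebra.Polynomial"
begin

definition KH_F :: "real \<Rightarrow> real \<Rightarrow> real \<Rightarrow> real" where
  "KH_F N d z = (1 - N * z)^2 * (1 - d^2 / (z^2 - 1))"

definition KH_phi :: "real \<Rightarrow> real \<Rightarrow> real \<Rightarrow> real" where
  "KH_phi N d z = 1 / d^2 + (1 - z / N) / (z^2 - 1)^2"

definition KH_quartic :: "real \<Rightarrow> real \<Rightarrow> real \<Rightarrow> complex poly" where
  "KH_quartic N d A = map_poly complex_of_real
     ([:1, -N:]^2 * [:-(1 + d^2), 0, 1:] + smult A [:-1, 0, 1:])"

definition real_root_count :: "complex poly \<Rightarrow> nat" where
  "real_root_count p = size (filter_mset (\<lambda>z. z \<in> \<real>) (proots p))"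

definition nonreal_root_count :: "complex poly \<Rightarrow> nat" where
  "nonreal_root_count p = size (filter_mset (\<lambda>z. z \<notin> \<real>) (proots p))"

end

theory Submission
  imports Defs "HOL-Computational_Algebra.Fundamental_Theorem_Algebra"
begin

text \<open>
  For real \<open>z\<close> with \<open>z\<^sup>2 \<noteq> 1\<close> the quartic is \<open>(z\<^sup>2 - 1) (F(z) + A)\<close>, and
  \<open>F'(z) = -2 N d\<^sup>2 (1 - N z) \<phi>(z)\<close>. On \<open>(1, \<infinity>)\<close> the function \<open>\<phi>\<close> is strictly
  increasing, negative at \<open>1/N\<close> and positive at \<open>\<surd>(1 + d\<^sup>2)\<close>, so it has exactly one zero
  \<open>z\<^sub>0\<^sub>1\<close> there, and \<open>z\<^sub>0\<^sub>1 > 1/N\<close>. Consequently \<open>F\<close> decreases on \<open>(-\<infinity>, -1)\<close>,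
  increases on \<open>(1, 1/N)\<close> and has its minimum over \<open>[1/N, \<infinity>)\<close> at \<open>z\<^sub>0\<^sub>1\<close>, while the
  quartic is negative on \<open>[-1, 1]\<close>. If \<open>A \<le> -F(z\<^sub>0\<^sub>1)\<close>, sign changes of the quartic give
  four real roots (a double one at \<open>z\<^sub>0\<^sub>1\<close> in case of equality); if \<open>A > -F(z\<^sub>0\<^sub>1)\<close>,
  monotonicity of \<open>F\<close> leaves exactly one root in each of \<open>(-\<infinity>, -1)\<close> and \<open>(1, 1/N)\<close>,
  both simple because \<open>F'\<close> does not vanish there.
\<close>

lemma poly_map_poly_of_real:
  "poly (map_poly of_real p) (of_real x :: 'a :: {real_algebra_1, comm_ring}) = of_real (poly p x)"
  by (induction p) (auto simp: map_poly_pCons)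

lemma pderiv_map_poly_of_real:
  "pderiv (map_poly of_real p :: 'a :: {real_algebra_1, idom} poly) = map_poly of_real (pderiv p)"
  by (rule poly_eqI) (simp add: coeff_pderiv coeff_map_poly)

lemma pderiv_nonzero_at_root:
  fixes p :: "'a :: {idom, ring_char_0} poly"
  assumes "p \<noteq> 0" "poly p x = 0"
  shows "pderiv p \<noteq> 0"
  using assms order_degree[of p x] order_root[of p x] by (auto simp: pderiv_eq_0_iff)

lemma order_eq_1_iff_pderiv:
  fixes p :: "'a :: field_char_0 poly"
  assumes "p \<noteq> 0" "poly p x = 0"
  shows "order x p = 1 \<longleftrightarrow> poly (pderiv p) x \<noteq> 0"
  using assms pderiv_nonzero_at_root[OF assms] by (simp add: order_pderiv order_root)

lemma size_le_size_proots:
  assumes "p \<noteq> 0" "\<And>x. count M x \<le> order x p"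
  shows "size M \<le> size (proots p)"
  by (rule size_mset_mono, rule mset_subset_eqI) (use assms in simp)

lemma size_proots_eq_card_roots:
  assumes "p \<noteq> 0" "\<And>x. poly p x = 0 \<Longrightarrow> order x p = 1"
  shows "size (proots p) = card {x. poly p x = 0}"
  using assms by (simp add: size_multiset_overloaded_eq)

lemma order_map_poly_of_real:
  fixes p :: "real poly"
  assumes "p \<noteq> 0"
  shows "order (of_real x) (map_poly of_real p :: 'a :: real_field poly) = order x p"
  using assms
proof (induction "degree p" arbitrary: p rule: less_induct)
  case less
  show ?case
  proof (cases "poly p x = 0")
    case False
    then show ?thesis
      by (simp add: order_0I poly_map_poly_of_real)
  next
    case True
    have "pderiv p \<noteq> 0"
      using pderiv_nonzero_at_root[OF less.prems True] .
    moreover have "degree (pderiv p) < degree p"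
      using calculation by (auto simp: pderiv_eq_0_iff degree_pderiv)
    ultimately show ?thesis
      using less True
      by (simp add: order_pderiv map_poly_eq_0_iff poly_map_poly_of_real pderiv_map_poly_of_real)
  qed
qed

lemma real_root_count_map_poly_of_real:
  fixes p :: "real poly"
  assumes "p \<noteq> 0"
  shows "real_root_count (map_poly of_real p) = size (proots p)"
proof -
  have "filter_mset (\<lambda>z. z \<in> \<real>) (proots (map_poly complex_of_real p))
          = image_mset complex_of_real (proots p)"
    (is "?real_roots = _")
  proof (rule multiset_eqI)
    fix z :: complex
    show "count ?real_roots z = count (image_mset of_real (proots p)) z"
    proof (cases "z \<in> \<real>")
      case True
      then obtain t where "z = of_real t"
        by (auto elim: Reals_cases)
      moreover have "{y. y = t \<and> poly p y = 0} = (if poly p t = 0 then {t} else {})"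
        by auto
      ultimately show ?thesis
        using assms
        by (auto simp: map_poly_eq_0_iff order_map_poly_of_real count_image_mset vimage_def
            Int_def order_0I)
    next
      case False
      then show ?thesis
        by (auto simp: count_image_mset)
    qed
  qed
  then show ?thesis
    unfolding real_root_count_def by simp
qed

lemma nonreal_root_count_map_poly_of_real:
  fixes p :: "real poly"
  assumes "p \<noteq> 0"
  shows "nonreal_root_count (map_poly of_real p) = degree p - size (proots p)"
proof -
  have "size (proots (map_poly complex_of_real p))
        = real_root_count (map_poly of_real p) + nonreal_root_count (map_poly of_real p)"
    unfolding real_root_count_def nonreal_root_count_def
    by (metis multiset_partition size_union)
  then show ?thesis
    using assms by (simp add: size_proots_complex degree_map_poly real_root_count_map_poly_of_real)
qed

lemma KH_F_has_real_derivative: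
  assumes "N \<noteq> 0" "d \<noteq> 0" "x\<^sup>2 \<noteq> 1"
  shows "(KH_F N d has_real_derivative -2*N*d\<^sup>2*(1 - N*x) * KH_phi N d x) (at x)"
proof -
  define u where "u = x\<^sup>2 - 1"
  have u: "u \<noteq> 0"
    using assms by (simp add: u_def)
  have key: "N*u + x*(1 - N*x) = x - N"
    unfolding u_def by (simp add: algebra_simps power2_eq_square)
  have "(KH_F N d has_real_derivative
          -2*N*(1 - N*x)*(1 - d\<^sup>2/u) + 2*x*d\<^sup>2*(1 - N*x)\<^sup>2/u\<^sup>2) (at x)"
    unfolding KH_F_def[abs_def]
    by (rule derivative_eq_intros refl u[unfolded u_def])+ (simp add: u_def power2_eq_square)
  also have "-2*N*(1 - N*x)*(1 - d\<^sup>2/u) + 2*x*d\<^sup>2*(1 - N*x)\<^sup>2/u\<^sup>2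
        = -2*N*(1 - N*x) + 2*d\<^sup>2*(1 - N*x)*(N*u + x*(1 - N*x))/u\<^sup>2"
    using u by (simp add: field_simps power2_eq_square)
  also have "\<dots> = -2*N*d\<^sup>2*(1 - N*x) * KH_phi N d x"
    unfolding key KH_phi_def u_def[symmetric] using assms(1,2) u by (simp add: field_simps)
  finally show ?thesis .
qed

lemma KH_phi_has_real_derivative:
  assumes "N \<noteq> 0" "x\<^sup>2 \<noteq> 1"
  shows "(KH_phi N d has_real_derivative (3*x\<^sup>2 - 4*N*x + 1) / (N * (x\<^sup>2 - 1)^3)) (at x)"
proof -
  have x: "x\<^sup>2 - 1 \<noteq> 0" "(x\<^sup>2 - 1)\<^sup>2 \<noteq> 0"
    using assms by auto
  show ?thesis
    unfolding KH_phi_def[abs_def]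
    by (rule derivative_eq_intros refl assms(1) x)+ (use assms x in \<open>simp add: field_simps; algebra\<close>)
qed

lemma KH_phi_strict_mono:
  assumes "0 < N" "N < 1" "1 < x" "x < y"
  shows "KH_phi N d x < KH_phi N d y"
proof (rule DERIV_pos_imp_increasing[OF \<open>x < y\<close>])
  fix t assume "x \<le> t" "t \<le> y"
  then have t: "1 < t"
    using assms by linarith
  have "0 < t\<^sup>2 - 1"
    using one_less_power[OF t, of 2] by simp
  then have "t\<^sup>2 \<noteq> 1"
    by simp
  have "0 < (3*t - 1)*(t - 1)"
    using t by simp
  also have "\<dots> \<le> 3*t\<^sup>2 - 4*N*t + 1"
    using assms t by (simp add: algebra_simps power2_eq_square)
  finally have "0 < (3*t\<^sup>2 - 4*N*t + 1) / (N * (t\<^sup>2 - 1)^3)"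
    using assms \<open>0 < t\<^sup>2 - 1\<close> by simp
  then show "\<exists>D. (KH_phi N d has_real_derivative D) (at t) \<and> 0 < D"
    using KH_phi_has_real_derivative[of N t d] assms(1) \<open>t\<^sup>2 \<noteq> 1\<close> by auto
qed

definition KH_real_quartic :: "real \<Rightarrow> real \<Rightarrow> real \<Rightarrow> real poly" where
  "KH_real_quartic N d A = [:1, -N:]^2 * [:-(1 + d\<^sup>2), 0, 1:] + smult A [:-1, 0, 1:]"

lemma KH_quartic_eq_map_poly: "KH_quartic N d A = map_poly of_real (KH_real_quartic N d A)"
  unfolding KH_quartic_def KH_real_quartic_def ..

lemma poly_KH_real_quartic:
  "poly (KH_real_quartic N d A) x = (1 - N*x)\<^sup>2 * (x\<^sup>2 - 1 - d\<^sup>2) + A * (x\<^sup>2 - 1)"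
  unfolding KH_real_quartic_def by (simp add: power2_eq_square algebra_simps)

lemma poly_KH_real_quartic_eq_KH_F:
  "x\<^sup>2 \<noteq> 1 \<Longrightarrow> poly (KH_real_quartic N d A) x = (x\<^sup>2 - 1) * (KH_F N d x + A)"
  unfolding poly_KH_real_quartic KH_F_def by (simp add: field_simps)

lemma degree_KH_real_quartic:
  assumes "N \<noteq> 0"
  shows "degree (KH_real_quartic N d A) = 4"
proof -
  have "degree ([:1, -N:]^2 * [:-(1 + d\<^sup>2), 0, 1:]) = 4"
    using assms by (subst degree_mult_eq) (auto simp: degree_power_eq)
  moreover have "degree (smult A [:-1, 0, 1:]) < 4"
    by (simp add: degree_smult_le le_less_trans)
  ultimately show ?thesis
    unfolding KH_real_quartic_def by (simp add: degree_add_eq_left)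
qed

lemma poly_pderiv_KH_real_quartic_at_root:
  assumes "N \<noteq> 0" "d \<noteq> 0" "x\<^sup>2 \<noteq> 1" "poly (KH_real_quartic N d A) x = 0"
  shows "poly (pderiv (KH_real_quartic N d A)) x = -2*N*d\<^sup>2*(1 - N*x)*(x\<^sup>2 - 1) * KH_phi N d x"
proof -
  have A: "A = -(1 - N*x)\<^sup>2 * (x\<^sup>2 - 1 - d\<^sup>2) / (x\<^sup>2 - 1)"
    using assms(3,4) unfolding poly_KH_real_quartic by (simp add: field_simps)
  have "poly (pderiv (KH_real_quartic N d A)) x
          = 2*x*(1 - N*x)\<^sup>2 - 2*N*(1 - N*x)*(x\<^sup>2 - 1 - d\<^sup>2) + 2*A*x"
    unfolding KH_real_quartic_def
    by (simp add: pderiv_add pderiv_mult pderiv_power pderiv_pCons pderiv_smult power2_eq_square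
        algebra_simps)
  also have "\<dots> = -2*N*d\<^sup>2*(1 - N*x)*(x\<^sup>2 - 1) * KH_phi N d x"
    unfolding A KH_phi_def using assms(1-3) by (simp add: field_simps) algebra
  finally show ?thesis .
qed

locale KH_parameters =
  fixes N d :: real
  assumes N_pos: "0 < N" and N_less_1: "N < 1" and d_pos: "0 < d"
    and d_large: "d\<^sup>2 > 1 / N\<^sup>2 - 1"
begin

lemma N_nonzero: "N \<noteq> 0" and d_nonzero: "d \<noteq> 0"
  using N_pos d_pos by auto

lemma one_less_inv_N: "1 < 1/N"
  using N_pos N_less_1 by (simp add: field_simps)

lemma sqrt_squared: "(sqrt (1 + d\<^sup>2))\<^sup>2 = 1 + d\<^sup>2"
  by (simp add: add_nonneg_nonneg)

lemma inv_N_less_sqrt: "1/N < sqrt (1 + d\<^sup>2)"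
proof -
  have "(1/N)\<^sup>2 < 1 + d\<^sup>2"
    using d_large by (simp add: power_divide)
  then show ?thesis
    using real_less_rsqrt by blast
qed

lemma KH_phi_inv_N_neg: "KH_phi N d (1/N) < 0"
proof -
  define w where "w = 1/N\<^sup>2 - 1"
  have w: "0 < w" "w < d\<^sup>2"
    using one_less_inv_N one_less_power[of "1/N" 2] d_large by (simp_all add: w_def power_divide)
  have "KH_phi N d (1/N) = 1/d\<^sup>2 + (-w)/w\<^sup>2"
    unfolding KH_phi_def w_def by (simp add: power_divide power2_eq_square)
  also have "\<dots> = 1/d\<^sup>2 - 1/w"
    using w by (simp add: power2_eq_square)
  also have "\<dots> < 0"
    using w by (simp add: frac_less2)
  finally show ?thesis .
qed

lemma KH_phi_sqrt_pos: "0 < KH_phi N d (sqrt (1 + d\<^sup>2))"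
proof -
  define s where "s = sqrt (1 + d\<^sup>2)"
  have s: "s\<^sup>2 = 1 + d\<^sup>2" "0 < s" "1/N < s"
    using sqrt_squared inv_N_less_sqrt one_less_inv_N by (auto simp: s_def add_pos_nonneg)
  have "KH_phi N d s = 1/d\<^sup>2 + (1 - s/N)/(d\<^sup>2)\<^sup>2"
    unfolding KH_phi_def using s(1) by simp
  also have "\<dots> = (s\<^sup>2 - s/N) / (d\<^sup>2)\<^sup>2"
    using d_nonzero s(1) by (simp add: field_simps power2_eq_square)
  also have "\<dots> = s * (s - 1/N) / (d\<^sup>2)\<^sup>2"
    by (simp add: power2_eq_square algebra_simps)
  finally show ?thesis
    using s d_nonzero by (simp add: s_def)
qed

lemma KH_phi_root_unique: "\<exists>!z. z \<in> {1<..<sqrt (1 + d\<^sup>2)} \<and> KH_phi N d z = 0"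
proof -
  have "continuous_on {1/N..sqrt (1 + d\<^sup>2)} (KH_phi N d)"
  proof (rule DERIV_atLeastAtMost_imp_continuous_on)
    fix t assume "1/N \<le> t"
    then have "1 < t"
      using one_less_inv_N by linarith
    then have "t\<^sup>2 \<noteq> 1"
      by (auto simp: abs_square_eq_1)
    then show "\<exists>D. (KH_phi N d has_real_derivative D) (at t)"
      using KH_phi_has_real_derivative N_nonzero by blast
  qed
  then obtain z where "1/N \<le> z" "z \<le> sqrt (1 + d\<^sup>2)" "KH_phi N d z = 0"
    using IVT'[of "KH_phi N d" "1/N" 0 "sqrt (1 + d\<^sup>2)"] KH_phi_inv_N_neg KH_phi_sqrt_pos
      inv_N_less_sqrt by auto
  then have "z \<in> {1<..<sqrt (1 + d\<^sup>2)}"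
    using one_less_inv_N KH_phi_sqrt_pos by (auto simp: le_less)
  moreover have "y = z" if "1 < y" "KH_phi N d y = 0" for y
    using KH_phi_strict_mono[OF N_pos N_less_1, of y z d] KH_phi_strict_mono[OF N_pos N_less_1, of z y d]
      that \<open>z \<in> _\<close> \<open>KH_phi N d z = 0\<close> by (cases y z rule: linorder_cases) auto
  ultimately show ?thesis
    using \<open>KH_phi N d z = 0\<close> by auto
qed

lemma KH_phi_pos_on_negatives: "x < 0 \<Longrightarrow> 0 < KH_phi N d x"
  unfolding KH_phi_def using N_pos d_nonzero by (simp add: add_pos_nonneg field_simps)

lemma KH_F_deriv_at:
  assumes "1 < \<bar>x\<bar>"
  shows "(KH_F N d has_real_derivative 2*N*d\<^sup>2 * ((N*x - 1) * KH_phi N d x)) (at x)"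
  using KH_F_has_real_derivative[OF N_nonzero d_nonzero, of x] assms
  by (simp add: abs_square_eq_1 algebra_simps)

lemma KH_F_deriv_neg:
  assumes "1 < \<bar>x\<bar>" "(N*x - 1) * KH_phi N d x < 0"
  shows "\<exists>D. (KH_F N d has_real_derivative D) (at x) \<and> D < 0"
proof -
  have "2*N*d\<^sup>2 * ((N*x - 1) * KH_phi N d x) < 0"
    using assms(2) N_pos d_nonzero by (simp add: mult_pos_neg)
  then show ?thesis
    using KH_F_deriv_at[OF assms(1)] by blast
qed

lemma KH_F_deriv_pos:
  assumes "1 < \<bar>x\<bar>" "0 < (N*x - 1) * KH_phi N d x"
  shows "\<exists>D. (KH_F N d has_real_derivative D) (at x) \<and> 0 < D"
proof -
  have "0 < 2*N*d\<^sup>2 * ((N*x - 1) * KH_phi N d x)"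
    using assms(2) N_pos d_nonzero by simp
  then show ?thesis
    using KH_F_deriv_at[OF assms(1)] by blast
qed

lemma KH_F_continuous_on:
  assumes "1 < a"
  shows "continuous_on {a..b} (KH_F N d)"
proof (rule DERIV_atLeastAtMost_imp_continuous_on)
  fix t assume "a \<le> t"
  then have "1 < \<bar>t\<bar>"
    using assms by linarith
  then show "\<exists>D. (KH_F N d has_real_derivative D) (at t)"
    using KH_F_deriv_at by blast
qed

lemma KH_F_decreasing_left:
  assumes "x < y" "y < -1"
  shows "KH_F N d y < KH_F N d x"
proof (rule DERIV_neg_imp_decreasing[OF \<open>x < y\<close>])
  fix t assume "x \<le> t" "t \<le> y"
  then have "t < -1"
    using assms by linarith
  then have "0 < KH_phi N d t"
    by (simp add: KH_phi_pos_on_negatives)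
  moreover have "N*t < 0"
    using \<open>t < -1\<close> N_pos by (intro mult_pos_neg) auto
  ultimately show "\<exists>D. (KH_F N d has_real_derivative D) (at t) \<and> D < 0"
    using \<open>t < -1\<close> by (intro KH_F_deriv_neg) (auto simp: mult_neg_pos)
qed

abbreviation quartic :: "real \<Rightarrow> real poly" where
  "quartic A \<equiv> KH_real_quartic N d A"

lemma degree_quartic: "degree (quartic A) = 4"
  by (rule degree_KH_real_quartic[OF N_nonzero])

lemma quartic_nonzero: "quartic A \<noteq> 0"
  using degree_quartic[of A] by auto

lemma quartic_root_order_ge_1: "poly (quartic A) x = 0 \<Longrightarrow> 1 \<le> order x (quartic A)"
  using quartic_nonzero order_root[of "quartic A" x] by simp

lemma quartic_root_iff: "1 < \<bar>x\<bar> \<Longrightarrow> poly (quartic A) x = 0 \<longleftrightarrow> KH_F N d x = -A"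
  by (simp add: poly_KH_real_quartic_eq_KH_F abs_square_eq_1 eq_neg_iff_add_eq_0)

lemma quartic_simple_root:
  assumes "poly (quartic A) x = 0" "1 < \<bar>x\<bar>" "N*x \<noteq> 1" "KH_phi N d x \<noteq> 0"
  shows "order x (quartic A) = 1"
proof -
  have "x\<^sup>2 \<noteq> 1"
    using assms(2) by (auto simp: abs_square_eq_1)
  then have "poly (pderiv (quartic A)) x \<noteq> 0"
    using poly_pderiv_KH_real_quartic_at_root[OF N_nonzero d_nonzero _ assms(1)] assms(3,4)
      N_nonzero d_nonzero
    by simp
  then show ?thesis
    using order_eq_1_iff_pderiv[OF quartic_nonzero assms(1)] by simp
qed

context
  fixes A :: real
  assumes A_pos: "0 < A"
begin

lemma quartic_neg_inside:
  assumes "\<bar>x\<bar> \<le> 1"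
  shows "poly (quartic A) x < 0"
proof -
  have "x\<^sup>2 \<le> 1"
    using assms abs_square_le_1 by blast
  have "N*x < 1"
    using assms N_pos N_less_1 abs_le_D1[OF assms] mult_left_mono[of x 1 N] by linarith
  then have "0 < (1 - N*x)\<^sup>2"
    by simp
  moreover have "x\<^sup>2 - 1 - d\<^sup>2 < 0"
    using \<open>x\<^sup>2 \<le> 1\<close> zero_less_power2[of d] d_nonzero by linarith
  ultimately have "(1 - N*x)\<^sup>2 * (x\<^sup>2 - 1 - d\<^sup>2) < 0"
    by (rule mult_pos_neg)
  moreover have "A * (x\<^sup>2 - 1) \<le> 0"
    using A_pos \<open>x\<^sup>2 \<le> 1\<close> by (simp add: mult_nonneg_nonpos)
  ultimately show ?thesis
    unfolding poly_KH_real_quartic by linarith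
qed

lemma quartic_pos_at_sqrt:
  assumes "\<bar>x\<bar> = sqrt (1 + d\<^sup>2)"
  shows "0 < poly (quartic A) x"
proof -
  have "x\<^sup>2 = 1 + d\<^sup>2"
    using sqrt_squared assms power2_abs[of x] by simp
  then have "poly (quartic A) x = A * d\<^sup>2"
    unfolding poly_KH_real_quartic by simp
  then show ?thesis
    using A_pos d_nonzero by simp
qed

lemma quartic_pos_at_inv_N: "0 < poly (quartic A) (1/N)"
proof -
  have "1 - N * (1/N) = 0"
    using N_nonzero by simp
  then have "poly (quartic A) (1/N) = A * ((1/N)\<^sup>2 - 1)"
    unfolding poly_KH_real_quartic by simp
  moreover have "1 < (1/N)\<^sup>2"
    using one_less_power[OF one_less_inv_N, of 2] by simp
  ultimately show ?thesis
    using A_pos by simp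
qed

lemma quartic_root_below_minus_1:
  obtains r where "r < -1" "poly (quartic A) r = 0"
proof -
  have "-sqrt (1 + d\<^sup>2) < -1"
    using inv_N_less_sqrt one_less_inv_N by linarith
  moreover have "0 < poly (quartic A) (-sqrt (1 + d\<^sup>2))"
    by (rule quartic_pos_at_sqrt) simp
  moreover have "poly (quartic A) (-1) < 0"
    by (rule quartic_neg_inside) simp
  ultimately show ?thesis
    using poly_IVT_neg that by blast
qed

lemma quartic_root_between_1_inv_N:
  obtains r where "1 < r" "r < 1/N" "poly (quartic A) r = 0"
proof -
  have "poly (quartic A) 1 < 0"
    by (rule quartic_neg_inside) simp
  then show ?thesis
    using poly_IVT_pos[OF one_less_inv_N] quartic_pos_at_inv_N that by blast
qed

end

end

locale KH_critical_point = KH_parameters +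
  fixes z01 :: real
  assumes z01_mem: "z01 \<in> {1<..<sqrt (1 + d\<^sup>2)}" and KH_phi_z01: "KH_phi N d z01 = 0"
begin

lemma KH_phi_neg: "1 < x \<Longrightarrow> x < z01 \<Longrightarrow> KH_phi N d x < 0"
  using KH_phi_strict_mono[OF N_pos N_less_1, of x z01 d] KH_phi_z01 by simp

lemma KH_phi_pos: "z01 < x \<Longrightarrow> 0 < KH_phi N d x"
  using KH_phi_strict_mono[OF N_pos N_less_1, of z01 x d] KH_phi_z01 z01_mem by simp

lemma inv_N_less_z01: "1/N < z01"
  using KH_phi_pos[of "1/N"] KH_phi_inv_N_neg KH_phi_z01 by (cases "1/N" z01 rule: linorder_cases) auto

lemma KH_F_increasing_middle:
  assumes "1 < x" "x < y" "y < 1/N"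
  shows "KH_F N d x < KH_F N d y"
proof (rule DERIV_pos_imp_increasing[OF \<open>x < y\<close>])
  fix t assume "x \<le> t" "t \<le> y"
  then have "1 < t" "t < 1/N"
    using assms by linarith+
  then have "KH_phi N d t < 0"
    using KH_phi_neg inv_N_less_z01 by simp
  moreover have "N*t - 1 < 0"
    using \<open>t < 1/N\<close> N_pos by (simp add: field_simps)
  ultimately show "\<exists>D. (KH_F N d has_real_derivative D) (at t) \<and> 0 < D"
    using \<open>1 < t\<close> by (intro KH_F_deriv_pos) (auto simp: mult_neg_neg)
qed

lemma KH_F_strict_min_at_z01:
  assumes "1/N \<le> x" "x \<noteq> z01"
  shows "KH_F N d z01 < KH_F N d x"
proof -
  have "1 < x"
    using assms one_less_inv_N by linarith
  have above_inv_N: "1 < t \<and> 0 < N*t - 1" if "1/N < t" for t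
  proof
    show "1 < t"
      using that one_less_inv_N by linarith
    show "0 < N*t - 1"
      using that N_pos by (simp add: field_simps)
  qed
  consider "x < z01" | "z01 < x"
    using assms(2) by linarith
  then show ?thesis
  proof cases
    case 1
    show ?thesis
    proof (rule DERIV_neg_imp_decreasing_open[OF 1])
      fix t assume "x < t" "t < z01"
      then show "\<exists>D. (KH_F N d has_real_derivative D) (at t) \<and> D < 0"
        using assms(1) above_inv_N[of t] KH_phi_neg[of t]
        by (intro KH_F_deriv_neg) (auto simp: mult_pos_neg)
    qed (rule KH_F_continuous_on[OF \<open>1 < x\<close>])
  next
    case 2
    show ?thesis
    proof (rule DERIV_pos_imp_increasing_open[OF 2])
      fix t assume "z01 < t" "t < x"
      then show "\<exists>D. (KH_F N d has_real_derivative D) (at t) \<and> 0 < D"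
        using inv_N_less_z01 above_inv_N[of t] KH_phi_pos[of t] by (intro KH_F_deriv_pos) auto
    qed (rule KH_F_continuous_on, use z01_mem in simp)
  qed
qed

lemma poly_quartic_z01: "poly (quartic A) z01 = (z01\<^sup>2 - 1) * (KH_F N d z01 + A)"
  using z01_mem by (simp add: poly_KH_real_quartic_eq_KH_F abs_square_eq_1)

context
  fixes A :: real
  assumes A_pos: "0 < A"
begin

lemma size_proots_quartic_eq_4:
  assumes "A \<le> -KH_F N d z01"
  shows "size (proots (quartic A)) = 4"
proof -
  obtain r1 where r1: "r1 < -1" "poly (quartic A) r1 = 0"
    by (rule quartic_root_below_minus_1[OF A_pos])
  obtain r2 where r2: "1 < r2" "r2 < 1/N" "poly (quartic A) r2 = 0"
    by (rule quartic_root_between_1_inv_N[OF A_pos])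
  have z01_sq: "0 < z01\<^sup>2 - 1"
    using z01_mem one_less_power[of z01 2] by simp
  obtain M where "size M = 4" "\<And>x. count M x \<le> order x (quartic A)"
  proof (cases "A < -KH_F N d z01")
    case True
    then have "poly (quartic A) z01 < 0"
      using z01_sq by (simp add: poly_quartic_z01 mult_pos_neg)
    moreover have "0 < poly (quartic A) (sqrt (1 + d\<^sup>2))"
      by (rule quartic_pos_at_sqrt[OF A_pos]) simp
    moreover have "z01 < sqrt (1 + d\<^sup>2)"
      using z01_mem by simp
    ultimately obtain r4 where r4: "z01 < r4" "poly (quartic A) r4 = 0"
      using poly_IVT_pos by blast
    obtain r3 where r3: "1/N < r3" "r3 < z01" "poly (quartic A) r3 = 0"
      using poly_IVT_neg[OF inv_N_less_z01 quartic_pos_at_inv_N[OF A_pos] \<open>poly (quartic A) z01 < 0\<close>] by blast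
    show ?thesis
    proof (rule that[of "{#r1, r2, r3, r4#}"])
      fix x
      show "count {#r1, r2, r3, r4#} x \<le> order x (quartic A)"
        using r1 r2 r3 r4 quartic_root_order_ge_1[of A x] by auto
    qed simp
  next
    case False
    then have "KH_F N d z01 + A = 0"
      using assms by linarith
    then have z01_root: "poly (quartic A) z01 = 0"
      unfolding poly_quartic_z01 by simp
    moreover have "poly (pderiv (quartic A)) z01 = 0"
      using poly_pderiv_KH_real_quartic_at_root[OF N_nonzero d_nonzero _ z01_root] z01_sq KH_phi_z01
      by simp
    ultimately have "2 \<le> order z01 (quartic A)"
      using order_eq_1_iff_pderiv[OF quartic_nonzero[of A]] quartic_root_order_ge_1 by fastforce
    show ?thesis
    proof (rule that[of "{#r1, r2, z01, z01#}"])
      fix x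
      show "count {#r1, r2, z01, z01#} x \<le> order x (quartic A)"
        using r1 r2 inv_N_less_z01 \<open>2 \<le> order z01 (quartic A)\<close> quartic_root_order_ge_1[of A x] by auto
    qed simp
  qed
  then show ?thesis
    using size_le_size_proots[OF quartic_nonzero[of A]] size_proots_le[of "quartic A"] degree_quartic by force
qed

lemma size_proots_quartic_eq_2:
  assumes "-KH_F N d z01 < A"
  shows "size (proots (quartic A)) = 2"
proof -
  obtain r1 where r1: "r1 < -1" "poly (quartic A) r1 = 0"
    by (rule quartic_root_below_minus_1[OF A_pos])
  obtain r2 where r2: "1 < r2" "r2 < 1/N" "poly (quartic A) r2 = 0"
    by (rule quartic_root_between_1_inv_N[OF A_pos])
  have F_r1: "KH_F N d r1 = -A" and F_r2: "KH_F N d r2 = -A"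
    using r1 r2 quartic_root_iff by auto
  have roots: "{x. poly (quartic A) x = 0} = {r1, r2}"
  proof (intro set_eqI iffI)
    fix x assume "x \<in> {x. poly (quartic A) x = 0}"
    then have root: "poly (quartic A) x = 0"
      by simp
    have "1 < \<bar>x\<bar>"
    proof (rule ccontr)
      assume "\<not> 1 < \<bar>x\<bar>"
      then have "poly (quartic A) x < 0"
        by (intro quartic_neg_inside A_pos) simp
      then show False
        using root by simp
    qed
    then have F_x: "KH_F N d x = -A"
      using root quartic_root_iff by blast
    consider "x < -1" | "1 < x" "x < 1/N" | "1/N \<le> x"
      using \<open>1 < \<bar>x\<bar>\<close> by linarith
    then show "x \<in> {r1, r2}"
    proof cases
      case 1
      then show ?thesis
        using r1 F_r1 F_x KH_F_decreasing_left[of x r1] KH_F_decreasing_left[of r1 x]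
        by (cases x r1 rule: linorder_cases) auto
    next
      case 2
      then show ?thesis
        using r2 F_r2 F_x KH_F_increasing_middle[of x r2] KH_F_increasing_middle[of r2 x]
        by (cases x r2 rule: linorder_cases) auto
    next
      case 3
      then have "KH_F N d z01 \<le> KH_F N d x"
        using KH_F_strict_min_at_z01[of x] by (cases "x = z01") auto
      then show ?thesis
        using assms F_x by linarith
    qed
  qed (use r1 r2 in auto)
  have "N*r1 < 0"
    using r1 N_pos by (intro mult_pos_neg) auto
  then have "order r1 (quartic A) = 1"
    using r1 KH_phi_pos_on_negatives[of r1] by (intro quartic_simple_root) auto
  moreover have "N*r2 < 1"
    using r2 N_pos by (simp add: field_simps)
  then have "order r2 (quartic A) = 1"
    using r2 KH_phi_neg[of r2] inv_N_less_z01 by (intro quartic_simple_root) auto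
  ultimately have "order x (quartic A) = 1" if "x \<in> {r1, r2}" for x
    using that by auto
  then have "size (proots (quartic A)) = card {r1, r2}"
    using size_proots_eq_card_roots[OF quartic_nonzero[of A]] roots by auto
  then show ?thesis
    using r1 r2 by simp
qed

end

end

theorem proposition2:
  fixes N d :: real
  assumes "0 < N" and "N < 1" and "0 < d" and "d^2 > 1 / N^2 - 1"
  shows "(\<exists>!z. z \<in> {1<..<sqrt (1 + d^2)} \<and> KH_phi N d z = 0) \<and>
         (\<forall>z01. z01 \<in> {1<..<sqrt (1 + d^2)} \<and> KH_phi N d z01 = 0 \<longrightarrow>
            (\<forall>A::real. 0 < A \<longrightarrow>
               (A \<le> - KH_F N d z01 \<longrightarrow> real_root_count (KH_quartic N d A) = 4) \<and>
               (A > - KH_F N d z01 \<longrightarrow> real_root_count (KH_quartic N d A) = 2 \<and>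
                                          nonreal_root_count (KH_quartic N d A) = 2)))"
proof -
  interpret KH_parameters N d
    using assms by unfold_locales
  have "(A \<le> - KH_F N d z01 \<longrightarrow> real_root_count (KH_quartic N d A) = 4) \<and>
        (A > - KH_F N d z01 \<longrightarrow> real_root_count (KH_quartic N d A) = 2 \<and>
                                   nonreal_root_count (KH_quartic N d A) = 2)"
    if "z01 \<in> {1<..<sqrt (1 + d^2)}" "KH_phi N d z01 = 0" "0 < A" for z01 A
  proof -
    interpret KH_critical_point N d z01
      using that by unfold_locales
    show ?thesis
      unfolding KH_quartic_eq_map_poly
      using size_proots_quartic_eq_4[OF \<open>0 < A\<close>] size_proots_quartic_eq_2[OF \<open>0 < A\<close>] degree_quartic
        real_root_count_map_poly_of_real[OF quartic_nonzero[of A]]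
        nonreal_root_count_map_poly_of_real[OF quartic_nonzero[of A]]
      by auto
  qed
  then show ?thesis
    using KH_phi_root_unique by blast
qed

end
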